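(* Let $D_1\subset\mathbb{R}^2$ be an open disc centered at the origin and let $\mathbf{f}=(f_1,f_2)$ be a vector field on $\mathbb{R}^2$ with $f_1,f_2\in C^2_c(D_1)$. Let $\boldsymbol{\gamma}_1,\dots,\boldsymbol{\gamma}_m$ be distinct unit vectors in $\mathbb{R}^2$ and $c_1,\dots,c_m$ nonzero real numbers, and let $\mathcal{S}\mathbf{f}$ be the corresponding vector-valued star transform. For $\boldsymbol{\psi}\in\mathbb{S}^1\setminus(\mathcal{Z}_1\cup\mathcal{Z}_2)$ let $$Q(\boldsymbol{\psi})=\begin{bmatrix}\boldsymbol{\gamma}(\boldsymbol{\psi})\\ \boldsymbol{\gamma}(\boldsymbol{\psi})^\perp\end{bmatrix}^{-1}\in GL(2,\mathbb{R}),$$ the inverse of the $2\times 2$ matrix whose rows are $\boldsymbol{\gamma}(\boldsymbol{\psi})$ and $\boldsymbol{\gamma}(\boldsymbol{\psi})^\perp$. Then for every $\boldsymbol{\psi}\in\mathbb{S}^1\setminus(\mathcal{Z}_1\cup\mathcal{Z}_2)$ and every $s\in\mathbb{R}$, $$Q(\boldsymbol{\psi})\,\frac{d}{ds}\mathcal{R}(\mathcal{S}\mathbf{f})(\boldsymbol{\psi},s)=\mathcal{R}\mathbf{f}(\boldsymbol{\psi},s),$$ where $\mathcal{R}$ is applied componentwise to vector-valued functions.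
   Context: For $\mathbf{x}=(x_1,x_2)$ set $\mathbf{x}^\perp=(-x_2,x_1)$. For a unit vector $\boldsymbol{\gamma}$, $\mathcal{X}_{\boldsymbol{\gamma}}h(\mathbf{x})=\int_0^\infty h(\mathbf{x}+t\boldsymbol{\gamma})\,dt$ (applied componentwise to vectors). The vector-valued star transform is $\mathcal{S}\mathbf{f}=\sum_{i=1}^m c_i\,\mathcal{X}_{\boldsymbol{\gamma}_i}\begin{bmatrix}\mathbf{f}\cdot\boldsymbol{\gamma}_i\\ \mathbf{f}\cdot\boldsymbol{\gamma}_i^\perp\end{bmatrix}$, an $\mathbb{R}^2$-valued function on $\mathbb{R}^2$. $\mathcal{R}h(\boldsymbol{\psi},s)=\int_{\mathbb{R}}h(s\boldsymbol{\psi}+t\boldsymbol{\psi}^\perp)\,dt$ is the Radon transform of a scalar function $h$ over the line $\{\mathbf{x}:\mathbf{x}\cdot\boldsymbol{\psi}=s\}$, $\boldsymbol{\psi}\in\mathbb{S}^1$, $s\in\mathbb{R}$. The set of singular directions of type 1 is $\mathcal{Z}_1=\bigcup_{i=1}^m\{\boldsymbol{\psi}\in\mathbb{S}^1:\boldsymbol{\psi}\cdot\boldsymbol{\gamma}_i=0\}$. For $\boldsymbol{\psi}\in\mathbb{S}^1\setminus\mathcal{Z}_1$ define $\boldsymbol{\gamma}(\boldsymbol{\psi})=-\sum_{i=1}^m\frac{c_i\boldsymbol{\gamma}_i}{\boldsymbol{\psi}\cdot\boldsymbol{\gamma}_i}\in\mathbb{R}^2$, and the set of singular directions of type 2 is $\mathcal{Z}_2=\{\boldsymbol{\psi}\in\mathbb{S}^1\setminus\mathcal{Z}_1:\boldsymbol{\gamma}(\boldsymbol{\psi})=0\}$.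 *)

theory Defs
  imports "HOL-Analysis.Analysis"
begin

type_synonym vec2 = "real^2"

definition perp :: "vec2 \<Rightarrow> vec2" where
  "perp x = vector [- (x$2), x$1]"

definition divbeam :: "vec2 \<Rightarrow> (vec2 \<Rightarrow> real) \<Rightarrow> vec2 \<Rightarrow> real" where
  "divbeam g h x = integral {0..} (\<lambda>t. h (x + t *\<^sub>R g))"

definition divbeamV :: "vec2 \<Rightarrow> (vec2 \<Rightarrow> vec2) \<Rightarrow> vec2 \<Rightarrow> vec2" where
  "divbeamV g h x = (\<chi> k. divbeam g (\<lambda>y. h y $ k) x)"

definition star_transform ::
  "nat \<Rightarrow> (nat \<Rightarrow> real) \<Rightarrow> (nat \<Rightarrow> vec2) \<Rightarrow> (vec2 \<Rightarrow> vec2) \<Rightarrow> vec2 \<Rightarrow> vec2" where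
  "star_transform m c g f x =
     (\<Sum>i = 1..m. c i *\<^sub>R divbeamV (g i) (\<lambda>y. vector [f y \<bullet> g i, f y \<bullet> perp (g i)]) x)"

definition radon :: "(vec2 \<Rightarrow> real) \<Rightarrow> vec2 \<Rightarrow> real \<Rightarrow> real" where
  "radon h psi s = integral UNIV (\<lambda>t. h (s *\<^sub>R psi + t *\<^sub>R perp psi))"

definition radonV :: "(vec2 \<Rightarrow> vec2) \<Rightarrow> vec2 \<Rightarrow> real \<Rightarrow> vec2" where
  "radonV h psi s = (\<chi> k. radon (\<lambda>x. h x $ k) psi s)"

definition sing_dirs1 :: "nat \<Rightarrow> (nat \<Rightarrow> vec2) \<Rightarrow> vec2 set" where
  "sing_dirs1 m g = (\<Union>i\<in>{1..m}. {psi. norm psi = 1 \<and> psi \<bullet> g i = 0})"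

definition gamma_psi :: "nat \<Rightarrow> (nat \<Rightarrow> real) \<Rightarrow> (nat \<Rightarrow> vec2) \<Rightarrow> vec2 \<Rightarrow> vec2" where
  "gamma_psi m c g psi = - (\<Sum>i = 1..m. (c i / (psi \<bullet> g i)) *\<^sub>R g i)"

definition sing_dirs2 :: "nat \<Rightarrow> (nat \<Rightarrow> real) \<Rightarrow> (nat \<Rightarrow> vec2) \<Rightarrow> vec2 set" where
  "sing_dirs2 m c g = {psi. norm psi = 1 \<and> psi \<notin> sing_dirs1 m g \<and> gamma_psi m c g psi = 0}"

definition Qmat :: "nat \<Rightarrow> (nat \<Rightarrow> real) \<Rightarrow> (nat \<Rightarrow> vec2) \<Rightarrow> vec2 \<Rightarrow> real^2^2" where
  "Qmat m c g psi = matrix_inv (vector [gamma_psi m c g psi, perp (gamma_psi m c g psi)])"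

definition C2 :: "(vec2 \<Rightarrow> real) \<Rightarrow> bool" where
  "C2 h \<longleftrightarrow> (\<exists>Dh D2h.
      (\<forall>x. (h has_derivative Dh x) (at x)) \<and>
      (\<forall>x v. ((\<lambda>y. Dh y v) has_derivative D2h x v) (at x)) \<and>
      (\<forall>v w. continuous_on UNIV (\<lambda>x. D2h x v w)))"

definition C2c :: "vec2 set \<Rightarrow> (vec2 \<Rightarrow> real) \<Rightarrow> bool" where
  "C2c U h \<longleftrightarrow> C2 h \<and> compact (closure {x. h x \<noteq> 0}) \<and> closure {x. h x \<noteq> 0} \<subseteq> U"

end

theory Submission
  imports Defs
begin

(* Write gam = a psi + b perp psi with a = psi \<bullet> gam nonzero.  A ray x + tau gam started on the
   line x \<bullet> psi = s meets the line x \<bullet> psi = s + tau a at time tau, so integrating the divergent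
   beam transform of a compactly supported continuous h over the first line and exchanging the two
   integrations (Fubini on a compact box) gives
     R(X_gam h)(psi, s) = integral over tau \<ge> 0 of Rh(psi, s + tau a),
   whose s-derivative is -Rh(psi, s) / a.  By linearity, d/ds R(Sf)(psi, s) is then the matrix with
   rows gamma(psi) and gamma(psi)-perp applied to Rf(psi, s); its determinant |gamma(psi)|^2 is
   nonzero off Z1 and Z2, and Q(psi) is its inverse. *)

lemma inner_vec2: "(x::vec2) \<bullet> y = x$1 * y$1 + x$2 * y$2"
  by (simp add: inner_vec_def sum_2)

lemma perp_nth [simp]: "perp x $ 1 = - x $ 2" "perp x $ 2 = x $ 1"
  by (simp_all add: perp_def)

lemma linear_perp: "linear perp"
  by (rule linearI) (simp_all add: vec_eq_iff forall_2)

lemma inner_perp_self [simp]: "x \<bullet> perp x = 0" "perp x \<bullet> x = 0"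
  by (simp_all add: inner_vec2)

lemma inner_perp_perp [simp]: "perp x \<bullet> perp y = x \<bullet> y"
  by (simp add: inner_vec2 add.commute)

lemma norm_perp [simp]: "norm (perp x) = norm x"
  by (simp add: norm_eq_sqrt_inner)

lemma inner_unit_frame:
  assumes "norm psi = 1"
  shows "(u *\<^sub>R psi + v *\<^sub>R perp psi) \<bullet> psi = u"
    and "(u *\<^sub>R psi + v *\<^sub>R perp psi) \<bullet> perp psi = v"
  using assms by (simp_all add: inner_add_left norm_eq_1)

lemma unit_frame_decomp:
  assumes "norm psi = 1"
  shows "x = (psi \<bullet> x) *\<^sub>R psi + (perp psi \<bullet> x) *\<^sub>R perp psi"
proof -
  have "psi$1 * psi$1 + psi$2 * psi$2 = 1"
    using assms by (simp add: norm_eq_1 inner_vec2)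
  then show ?thesis
    by (simp add: vec_eq_iff forall_2 inner_vec2) algebra
qed

lemma abs_frame_coords_le_norm:
  assumes "norm psi = 1"
  shows "\<bar>u\<bar> \<le> norm (u *\<^sub>R psi + v *\<^sub>R perp psi)"
    and "\<bar>v\<bar> \<le> norm (u *\<^sub>R psi + v *\<^sub>R perp psi)"
  using Cauchy_Schwarz_ineq2[of "u *\<^sub>R psi + v *\<^sub>R perp psi" psi]
    Cauchy_Schwarz_ineq2[of "u *\<^sub>R psi + v *\<^sub>R perp psi" "perp psi"]
  by (simp_all add: inner_unit_frame assms)

lemma has_integral_on_superset_vanishing:
  fixes f :: "'n::euclidean_space \<Rightarrow> 'a::banach"
  assumes "(f has_integral i) S" "S \<subseteq> T" "\<And>x. x \<in> T - S \<Longrightarrow> f x = 0"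
  shows "(f has_integral i) T"
proof -
  have "((\<lambda>x. if x \<in> S then f x else 0) has_integral i) T"
    using assms(1,2) by simp
  then show ?thesis
    by (rule has_integral_cong[THEN iffD1, rotated]) (use assms(3) in auto)
qed

lemma has_integral_integral_Icc_on_superset:
  fixes f :: "real \<Rightarrow> 'a::banach"
  assumes "continuous_on {a..b} f" "{a..b} \<subseteq> S" "\<And>x. x \<in> S - {a..b} \<Longrightarrow> f x = 0"
  shows "(f has_integral integral {a..b} f) S"
  using has_integral_on_superset_vanishing[OF integrable_integral[OF integrable_continuous_real]]
    assms by blast

lemma has_integral_shift_vanishing:
  fixes f :: "real \<Rightarrow> 'a::banach"
  assumes "continuous_on {a..b} f" "\<And>x. x \<notin> {a..b} \<Longrightarrow> f x = 0"
  shows "((\<lambda>x. f (x + c)) has_integral integral {a..b} f) UNIV"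
proof -
  have "((\<lambda>x. f (x + c)) has_integral integral {a..b} f) {a - c..b - c}"
    by (rule has_integral_shift_real_ivl)
       (use assms(1) in \<open>blast intro: integrable_continuous_real\<close>)
  then show ?thesis
    by (rule has_integral_on_superset) (auto intro: assms(2))
qed

lemma continuous_on_integral_Icc_param:
  fixes K :: "'a::topological_space \<Rightarrow> real \<Rightarrow> 'c::banach"
  assumes "continuous_on UNIV (\<lambda>(x, y). K x y)"
  shows "continuous_on S (\<lambda>x. integral {c..d} (K x))"
  unfolding cbox_interval[symmetric]
  by (rule integral_continuous_on_param) (rule continuous_on_subset[OF assms], auto)

lemma has_integral_swap_vanishing:
  fixes K :: "real \<Rightarrow> real \<Rightarrow> 'c::banach"
  assumes cont: "continuous_on UNIV (\<lambda>(x, y). K x y)" and "{c..d} \<subseteq> B"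
    and vanish: "\<And>x y. y \<in> B \<Longrightarrow> x \<notin> {a..b} \<or> y \<notin> {c..d} \<Longrightarrow> K x y = 0"
  shows "((\<lambda>x. integral B (K x)) has_integral integral B (\<lambda>y. integral UNIV (\<lambda>x. K x y))) UNIV"
proof -
  define J where "J x = integral {c..d} (K x)" for x
  define P where "P y = integral {a..b} (\<lambda>x. K x y)" for y
  have cont_swap: "continuous_on UNIV (\<lambda>(y, x). K x y)"
    using continuous_on_swap_args[of UNIV UNIV K] cont by simp
  have "continuous_on S (K x)" "continuous_on S (\<lambda>x. K x y)" for S x y
    using continuous_on_compose2[OF cont continuous_on_Pair[OF continuous_on_const continuous_on_id]]
      continuous_on_compose2[OF cont continuous_on_Pair[OF continuous_on_id continuous_on_const]]
    by auto
  then have "(K x has_integral J x) B" "y \<in> B \<Longrightarrow> ((\<lambda>x. K x y) has_integral P y) UNIV" for x y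
    unfolding J_def P_def using assms(2)
    by (auto intro!: has_integral_integral_Icc_on_superset vanish)
  then have inner_J: "integral B (K x) = J x" and inner_P: "y \<in> B \<Longrightarrow> integral UNIV (\<lambda>x. K x y) = P y"
    for x y by (blast intro: integral_unique)+
  have "integral {c..d} (K x) = 0" if "x \<notin> {a..b}" for x
  proof -
    have "K x y = 0" if "y \<in> {c..d}" for y
      using vanish \<open>x \<notin> {a..b}\<close> that assms(2) by blast
    then show ?thesis
      by (metis integral_0 integral_cong)
  qed
  then have "(J has_integral integral {a..b} J) UNIV"
    unfolding J_def using assms(2)
    by (intro has_integral_integral_Icc_on_superset continuous_on_integral_Icc_param[OF cont]) auto
  moreover have "(P has_integral integral {c..d} P) B"
    unfolding P_def using assms(2)
    by (intro has_integral_integral_Icc_on_superset continuous_on_integral_Icc_param[OF cont_swap])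
       (auto simp: vanish)
  moreover have "integral {a..b} J = integral {c..d} P"
    unfolding J_def P_def using integral_swap_continuous[of a c b d K] continuous_on_subset[OF cont]
    by (simp add: cbox_interval)
  ultimately show ?thesis
    by (simp add: inner_J inner_P integral_unique cong: integral_cong)
qed

lemma antiderivative_const_outside:
  fixes G R :: "real \<Rightarrow> real"
  assumes G: "\<And>x. (G has_real_derivative R x) (at x)" and supp: "\<And>u. r \<le> \<bar>u\<bar> \<Longrightarrow> R u = 0"
  shows "r \<le> y \<Longrightarrow> G y = G r" and "y \<le> -r \<Longrightarrow> G y = G (-r)"
proof -
  have flat: "(G has_field_derivative 0) (at x within S)" if "r \<le> \<bar>x\<bar>" for x S
    using G[of x] supp[OF that] by (simp add: has_field_derivative_at_within)
  obtain k\<^sub>1 k\<^sub>2 where "\<forall>z \<in> {r..}. G z = k\<^sub>1" "\<forall>z \<in> {..-r}. G z = k\<^sub>2"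
    using has_field_derivative_zero_constant[of "{r..}" G]
      has_field_derivative_zero_constant[of "{..-r}" G] flat by force
  then show "r \<le> y \<Longrightarrow> G y = G r" and "y \<le> -r \<Longrightarrow> G y = G (-r)"
    by simp_all
qed

lemma ray_integral_antiderivative:
  fixes G R :: "real \<Rightarrow> real"
  assumes G: "\<And>x. (G has_real_derivative R x) (at x)" and supp: "\<And>u. r \<le> \<bar>u\<bar> \<Longrightarrow> R u = 0"
    and a: "a \<noteq> 0"
  shows "((\<lambda>\<tau>. R (y + \<tau> * a)) has_integral (G (sgn a * r) - G y) / a) {0..}"
proof -
  define T where "T = (\<bar>r\<bar> + \<bar>y\<bar>) / \<bar>a\<bar>"
  have aT: "T * \<bar>a\<bar> = \<bar>r\<bar> + \<bar>y\<bar>" and "0 \<le> T"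
    using a by (simp_all add: T_def)
  have "((\<lambda>\<tau>. G (y + \<tau> * a)) has_real_derivative R (y + \<tau> * a) * a) (at \<tau>)" for \<tau>
    by (rule DERIV_chain2[OF G]) (auto intro!: derivative_eq_intros)
  then have "((\<lambda>\<tau>. G (y + \<tau> * a) / a) has_real_derivative R (y + \<tau> * a)) (at \<tau>)" for \<tau>
    using DERIV_cdivide[where c = a] a by fastforce
  then have "((\<lambda>\<tau>. R (y + \<tau> * a)) has_integral G (y + T * a) / a - G (y + 0 * a) / a) {0..T}"
    using \<open>0 \<le> T\<close>
    by (intro fundamental_theorem_of_calculus)
       (auto simp: has_real_derivative_iff_has_vector_derivative
          intro: has_vector_derivative_at_within)
  moreover have "G (y + T * a) = G (sgn a * r)"
  proof (cases "a > 0")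
    case True
    then have "r \<le> y + T * a"
      using aT by simp
    then have "G (y + T * a) = G r"
      by (rule antiderivative_const_outside(1)[of G R r, rotated 2]) (fact G, fact supp)
    with True show ?thesis
      by simp
  next
    case False
    then have "y + T * a \<le> -r"
      using aT a by simp
    then have "G (y + T * a) = G (-r)"
      by (rule antiderivative_const_outside(2)[of G R r, rotated 2]) (fact G, fact supp)
    with False a show ?thesis
      by (simp add: sgn_if)
  qed
  ultimately have "((\<lambda>\<tau>. R (y + \<tau> * a)) has_integral (G (sgn a * r) - G y) / a) {0..T}"
    by (simp add: diff_divide_distrib)
  moreover have "R (y + \<tau> * a) = 0" if "T < \<tau>" for \<tau>
  proof (rule supp)
    have "T * \<bar>a\<bar> \<le> \<tau> * \<bar>a\<bar>" "\<bar>\<tau> * a\<bar> = \<tau> * \<bar>a\<bar>"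
      using that \<open>0 \<le> T\<close> by (simp_all add: mult_right_mono abs_mult)
    then show "r \<le> \<bar>y + \<tau> * a\<bar>"
      using aT by linarith
  qed
  ultimately show ?thesis
    by (elim has_integral_on_superset_vanishing) auto
qed

lemma ray_integral_has_derivative:
  fixes R :: "real \<Rightarrow> real"
  assumes "continuous_on UNIV R" and supp: "\<And>u. r \<le> \<bar>u\<bar> \<Longrightarrow> R u = 0" and "a \<noteq> 0"
  shows "((\<lambda>x. integral {0..} (\<lambda>\<tau>. R (x + \<tau> * a))) has_real_derivative - R x / a) (at x)"
proof -
  obtain G where G: "\<And>x. (G has_real_derivative R x) (at x)"
    using einterval_antiderivative[of "-\<infinity>" "\<infinity>" R] assms(1)
    by (auto simp: continuous_on_eq_continuous_at has_real_derivative_iff_has_vector_derivative)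
  then have "(\<lambda>x. integral {0..} (\<lambda>\<tau>. R (x + \<tau> * a))) = (\<lambda>x. (G (sgn a * r) - G x) / a)"
    using ray_integral_antiderivative[of G R r, OF G supp \<open>a \<noteq> 0\<close>] by (auto intro: integral_unique)
  then show ?thesis
    using \<open>a \<noteq> 0\<close> by (auto intro!: derivative_eq_intros G)
qed

lemma ray_exit_bounds:
  fixes a b r s t \<tau> :: real
  assumes "\<bar>s + \<tau> * a\<bar> < r" "\<bar>t + \<tau> * b\<bar> < r" "0 \<le> \<tau>" "a \<noteq> 0"
  shows "\<tau> \<le> (\<bar>r\<bar> + \<bar>s\<bar>) / \<bar>a\<bar>" and "\<bar>t\<bar> \<le> \<bar>r\<bar> + (\<bar>r\<bar> + \<bar>s\<bar>) / \<bar>a\<bar> * \<bar>b\<bar>"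
proof -
  have "\<bar>\<tau> * a\<bar> \<le> \<bar>s + \<tau> * a\<bar> + \<bar>s\<bar>" "\<bar>t\<bar> \<le> \<bar>t + \<tau> * b\<bar> + \<bar>\<tau> * b\<bar>"
    by arith+
  moreover have "\<bar>\<tau> * a\<bar> = \<tau> * \<bar>a\<bar>" "\<bar>\<tau> * b\<bar> = \<tau> * \<bar>b\<bar>"
    using assms(3) by (simp_all add: abs_mult)
  ultimately have "\<tau> * \<bar>a\<bar> \<le> \<bar>r\<bar> + \<bar>s\<bar>" "\<bar>t\<bar> \<le> \<bar>r\<bar> + \<tau> * \<bar>b\<bar>"
    using assms(1,2) by linarith+
  then show "\<tau> \<le> (\<bar>r\<bar> + \<bar>s\<bar>) / \<bar>a\<bar>"
    using assms(4) by (simp add: field_simps)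
  then show "\<bar>t\<bar> \<le> \<bar>r\<bar> + (\<bar>r\<bar> + \<bar>s\<bar>) / \<bar>a\<bar> * \<bar>b\<bar>"
    using \<open>\<bar>t\<bar> \<le> \<bar>r\<bar> + \<tau> * \<bar>b\<bar>\<close> by (meson add_left_mono mult_right_mono abs_ge_zero order_trans)
qed

context
  fixes h :: "vec2 \<Rightarrow> real" and psi :: vec2 and r :: real
  assumes h_cont: "continuous_on UNIV h" and h_supp: "\<And>x. r \<le> norm x \<Longrightarrow> h x = 0"
    and psi_unit: "norm psi = 1"
begin

lemma continuous_on_frame_line: "continuous_on S (\<lambda>t. h (s *\<^sub>R psi + t *\<^sub>R perp psi))"
  by (rule continuous_on_compose2[OF h_cont]) (auto intro!: continuous_intros)

lemma frame_line_vanishing: "t \<notin> {-r..r} \<Longrightarrow> h (s *\<^sub>R psi + t *\<^sub>R perp psi) = 0"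
  using abs_frame_coords_le_norm(2)[OF psi_unit, of t s] by (intro h_supp) auto

lemma radon_eq_integral_Icc:
  "radon h psi s = integral {-r..r} (\<lambda>t. h (s *\<^sub>R psi + t *\<^sub>R perp psi))"
  using has_integral_shift_vanishing[of "-r" r "\<lambda>t. h (s *\<^sub>R psi + t *\<^sub>R perp psi)" 0]
  unfolding radon_def by (simp add: continuous_on_frame_line frame_line_vanishing integral_unique)

lemma radon_line_has_integral:
  "((\<lambda>t. h (s *\<^sub>R psi + (t + c) *\<^sub>R perp psi)) has_integral radon h psi s) UNIV"
  unfolding radon_eq_integral_Icc
  by (rule has_integral_shift_vanishing[where f = "\<lambda>t. h (s *\<^sub>R psi + t *\<^sub>R perp psi)"])
     (simp_all add: continuous_on_frame_line frame_line_vanishing)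

lemma continuous_on_radon: "continuous_on UNIV (radon h psi)"
proof -
  have "continuous_on UNIV (\<lambda>(s, t). h (s *\<^sub>R psi + t *\<^sub>R perp psi))"
    unfolding case_prod_beta'
    by (rule continuous_on_compose2[OF h_cont]) (auto intro!: continuous_intros)
  then show ?thesis
    unfolding radon_eq_integral_Icc[abs_def] by (rule continuous_on_integral_Icc_param)
qed

lemma radon_vanishing:
  assumes "r \<le> \<bar>s\<bar>"
  shows "radon h psi s = 0"
proof -
  have "h (s *\<^sub>R psi + t *\<^sub>R perp psi) = 0" for t
    using abs_frame_coords_le_norm(1)[OF psi_unit, of s t] assms by (auto intro: h_supp)
  then show ?thesis
    by (simp add: radon_def)
qed

lemma radon_divbeam_has_integral:
  assumes "psi \<bullet> gam \<noteq> 0"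
  shows "((\<lambda>t. divbeam gam h (s *\<^sub>R psi + t *\<^sub>R perp psi)) has_integral
           integral {0..} (\<lambda>\<tau>. radon h psi (s + \<tau> * (psi \<bullet> gam)))) UNIV"
proof -
  define a b where "a = psi \<bullet> gam" and "b = perp psi \<bullet> gam"
  define T where "T = (\<bar>r\<bar> + \<bar>s\<bar>) / \<bar>a\<bar>"
  define L where "L = \<bar>r\<bar> + T * \<bar>b\<bar>"
  have ray_point: "s *\<^sub>R psi + t *\<^sub>R perp psi + \<tau> *\<^sub>R gam
      = (s + \<tau> * a) *\<^sub>R psi + (t + \<tau> * b) *\<^sub>R perp psi" for t \<tau>
    by (subst unit_frame_decomp[OF psi_unit, of gam, folded a_def b_def]) (simp add: algebra_simps)
  have "h (s *\<^sub>R psi + t *\<^sub>R perp psi + \<tau> *\<^sub>R gam) = 0"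
    if "\<tau> \<in> {0..}" "t \<notin> {-L..L} \<or> \<tau> \<notin> {0..T}" for t \<tau>
  proof (rule ccontr)
    assume "h (s *\<^sub>R psi + t *\<^sub>R perp psi + \<tau> *\<^sub>R gam) \<noteq> 0"
    then have "norm ((s + \<tau> * a) *\<^sub>R psi + (t + \<tau> * b) *\<^sub>R perp psi) < r"
      using h_supp unfolding ray_point by force
    then have "\<bar>s + \<tau> * a\<bar> < r" "\<bar>t + \<tau> * b\<bar> < r"
      using abs_frame_coords_le_norm[OF psi_unit] by (meson le_less_trans)+
    then have "\<tau> \<le> T" "\<bar>t\<bar> \<le> L"
      using ray_exit_bounds[of s \<tau> a r t b] that(1) assms by (auto simp: T_def L_def a_def)
    with that show False
      by auto
  qed
  moreover have "continuous_on UNIV (\<lambda>(t, \<tau>). h (s *\<^sub>R psi + t *\<^sub>R perp psi + \<tau> *\<^sub>R gam))"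
    unfolding case_prod_beta'
    by (rule continuous_on_compose2[OF h_cont]) (auto intro!: continuous_intros)
  ultimately have "((\<lambda>t. integral {0..} (\<lambda>\<tau>. h (s *\<^sub>R psi + t *\<^sub>R perp psi + \<tau> *\<^sub>R gam))) has_integral
      integral {0..} (\<lambda>\<tau>. integral UNIV (\<lambda>t. h (s *\<^sub>R psi + t *\<^sub>R perp psi + \<tau> *\<^sub>R gam)))) UNIV"
    by (intro has_integral_swap_vanishing[where a = "-L" and b = L and c = 0 and d = T]) auto
  moreover have "integral UNIV (\<lambda>t. h (s *\<^sub>R psi + t *\<^sub>R perp psi + \<tau> *\<^sub>R gam))
      = radon h psi (s + \<tau> * a)" for \<tau>
    unfolding ray_point using radon_line_has_integral by blast
  ultimately show ?thesis
    by (simp add: divbeam_def a_def add.assoc)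
qed

lemma radon_divbeam_has_derivative:
  assumes "psi \<bullet> gam \<noteq> 0"
  shows "((\<lambda>s. radon (divbeam gam h) psi s) has_real_derivative
           - radon h psi s / (psi \<bullet> gam)) (at s)"
proof -
  have "radon (divbeam gam h) psi = (\<lambda>s. integral {0..} (\<lambda>\<tau>. radon h psi (s + \<tau> * (psi \<bullet> gam))))"
    using radon_divbeam_has_integral[OF assms] by (auto simp: radon_def integral_unique)
  then show ?thesis
    using ray_integral_has_derivative[OF continuous_on_radon radon_vanishing assms] by simp
qed

end

lemma has_vector_derivative_componentwise_vec:
  fixes f :: "real \<Rightarrow> real^'n"
  assumes "\<And>k. ((\<lambda>t. f t $ k) has_real_derivative D $ k) (at t within S)"
  shows "(f has_vector_derivative D) (at t within S)"
  unfolding has_vector_derivative_def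
proof (subst has_derivative_componentwise_within, intro ballI)
  fix i :: "real^'n"
  assume "i \<in> Basis"
  then obtain k where "i = axis k 1"
    by (auto simp: Basis_vec_def)
  then show "((\<lambda>x. f x \<bullet> i) has_derivative (\<lambda>x. x *\<^sub>R D \<bullet> i)) (at t within S)"
    using assms[of k] by (simp add: inner_axis has_field_derivative_def mult_commute_abs)
qed

lemma radonV_sum:
  assumes "finite I"
    and "\<And>i k. i \<in> I \<Longrightarrow> (\<lambda>t. F i (s *\<^sub>R psi + t *\<^sub>R perp psi) $ k) integrable_on UNIV"
  shows "radonV (\<lambda>x. \<Sum>i\<in>I. c i *\<^sub>R F i x) psi s = (\<Sum>i\<in>I. c i *\<^sub>R radonV (F i) psi s)"
  unfolding vec_eq_iff radonV_def radon_def
  by (simp, subst integral_sum) (use assms in \<open>auto intro: integrable_on_mult_right\<close>)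

lemma radonV_matrix_vector_mult:
  assumes "\<And>k. (\<lambda>t. f (s *\<^sub>R psi + t *\<^sub>R perp psi) $ k) integrable_on UNIV"
  shows "radonV (\<lambda>x. A *v f x) psi s = A *v radonV f psi s"
  unfolding vec_eq_iff radonV_def radon_def matrix_vector_mult_def
  by (simp, subst integral_sum) (use assms in \<open>auto intro: integrable_on_mult_right\<close>)

context
  fixes F :: "vec2 \<Rightarrow> vec2" and psi :: vec2 and r :: real
  assumes F_cont: "\<And>k. continuous_on UNIV (\<lambda>x. F x $ k)"
    and F_supp: "\<And>k x. r \<le> norm x \<Longrightarrow> F x $ k = 0"
    and psi_unit: "norm psi = 1"
begin

lemma radonV_line_integrable: "(\<lambda>t. F (s *\<^sub>R psi + t *\<^sub>R perp psi) $ k) integrable_on UNIV"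
  using radon_line_has_integral[OF F_cont F_supp psi_unit, where s = s and c = 0] by auto

lemma divbeamV_line_integrable:
  assumes "psi \<bullet> gam \<noteq> 0"
  shows "(\<lambda>t. divbeamV gam F (s *\<^sub>R psi + t *\<^sub>R perp psi) $ k) integrable_on UNIV"
  using radon_divbeam_has_integral[OF F_cont F_supp psi_unit assms, where s = s]
  by (auto simp: divbeamV_def)

lemma radonV_divbeamV_has_derivative:
  assumes "psi \<bullet> gam \<noteq> 0"
  shows "((\<lambda>s. radonV (divbeamV gam F) psi s) has_vector_derivative
           (- 1 / (psi \<bullet> gam)) *\<^sub>R radonV F psi s) (at s)"
  using radon_divbeam_has_derivative[OF F_cont F_supp psi_unit assms]
  by (intro has_vector_derivative_componentwise_vec) (simp add: radonV_def divbeamV_def)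

end

definition frame_matrix :: "vec2 \<Rightarrow> real^2^2" where
  "frame_matrix v = vector [v, perp v]"

lemma frame_matrix_mult_vec: "frame_matrix v *v x = vector [v \<bullet> x, perp v \<bullet> x]"
  by (simp add: frame_matrix_def vec_eq_iff forall_2 matrix_vector_mult_def sum_2 inner_vec2)

lemma linear_frame_matrix_mult_vec: "linear (\<lambda>v. frame_matrix v *v x)"
  by (rule linearI)
     (simp_all add: frame_matrix_mult_vec vec_eq_iff forall_2 inner_add_left
        linear_add[OF linear_perp] linear_scale[OF linear_perp])

lemma det_frame_matrix: "det (frame_matrix v) = v \<bullet> v"
  by (simp add: frame_matrix_def det_2 inner_vec2)

lemma matrix_inv_left:
  fixes A :: "'a::semiring_1^'n^'n"
  assumes "invertible A"
  shows "matrix_inv A ** A = mat 1"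
  using someI_ex[OF assms[unfolded invertible_def]] unfolding matrix_inv_def by blast

lemma matrix_inv_frame_matrix_mult_vec:
  assumes "v \<noteq> 0"
  shows "matrix_inv (frame_matrix v) *v (frame_matrix v *v x) = x"
  using assms
  by (simp add: matrix_vector_mul_assoc matrix_inv_left invertible_det_nz det_frame_matrix)

lemma star_transform_eq_frame_matrix:
  "star_transform m c g f
     = (\<lambda>x. \<Sum>i = 1..m. c i *\<^sub>R divbeamV (g i) (\<lambda>y. frame_matrix (g i) *v f y) x)"
  by (simp add: star_transform_def fun_eq_iff frame_matrix_mult_vec inner_commute)

lemma frame_matrix_gamma_psi_mult_vec:
  "frame_matrix (gamma_psi m c g psi) *v x
     = (\<Sum>i = 1..m. (- c i / (psi \<bullet> g i)) *\<^sub>R (frame_matrix (g i) *v x))"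
proof -
  interpret linear "\<lambda>v. frame_matrix v *v x"
    by (rule linear_frame_matrix_mult_vec)
  show ?thesis
    by (simp add: gamma_psi_def neg sum scale sum_negf[symmetric])
qed

lemma radonV_star_transform_has_derivative:
  assumes f_cont: "\<And>k. continuous_on UNIV (\<lambda>x. f x $ k)"
    and f_supp: "\<And>k x. r \<le> norm x \<Longrightarrow> f x $ k = 0"
    and psi_unit: "norm psi = 1" and transversal: "\<And>i. i \<in> {1..m} \<Longrightarrow> psi \<bullet> g i \<noteq> 0"
  shows "((\<lambda>t. radonV (star_transform m c g f) psi t) has_vector_derivative
           frame_matrix (gamma_psi m c g psi) *v radonV f psi s) (at s)"
proof -
  define F where "F i y = frame_matrix (g i) *v f y" for i y
  have F_cont: "continuous_on UNIV (\<lambda>x. F i x $ k)" for i k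
    unfolding F_def matrix_vector_mult_def by (auto intro!: continuous_intros f_cont)
  have F_supp: "F i x $ k = 0" if "r \<le> norm x" for i k x
    unfolding F_def matrix_vector_mult_def by (simp add: f_supp that)
  have "radonV (star_transform m c g f) psi t
      = (\<Sum>i = 1..m. c i *\<^sub>R radonV (divbeamV (g i) (F i)) psi t)" for t
    unfolding star_transform_eq_frame_matrix F_def[symmetric]
  proof (rule radonV_sum)
    show "(\<lambda>u. divbeamV (g i) (F i) (t *\<^sub>R psi + u *\<^sub>R perp psi) $ k) integrable_on UNIV"
      if "i \<in> {1..m}" for i k
      using divbeamV_line_integrable[OF F_cont[where i = i] F_supp[where i = i] psi_unit
          transversal[OF that]] .
  qed simp
  moreover have "((\<lambda>t. \<Sum>i = 1..m. c i *\<^sub>R radonV (divbeamV (g i) (F i)) psi t) has_vector_derivative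
      (\<Sum>i = 1..m. c i *\<^sub>R ((- 1 / (psi \<bullet> g i)) *\<^sub>R radonV (F i) psi s))) (at s)"
    by (intro has_vector_derivative_sum
        bounded_linear.has_vector_derivative[OF bounded_linear_scaleR_right]
        radonV_divbeamV_has_derivative[OF F_cont F_supp psi_unit] transversal) simp
  moreover have "radonV (F i) psi s = frame_matrix (g i) *v radonV f psi s" for i
    unfolding F_def
    by (rule radonV_matrix_vector_mult) (rule radonV_line_integrable[OF f_cont f_supp psi_unit])
  ultimately show ?thesis
    by (simp add: frame_matrix_gamma_psi_mult_vec)
qed

lemma C2_continuous: "C2 h \<Longrightarrow> continuous_on UNIV h"
  unfolding C2_def by (metis continuous_at_imp_continuous_on has_derivative_continuous)

lemma C2c_vanishing:
  assumes "C2c U h" "x \<notin> U"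
  shows "h x = 0"
proof -
  have "{x. h x \<noteq> 0} \<subseteq> U"
    using assms(1) closure_subset unfolding C2c_def by (meson order_trans)
  with assms(2) show ?thesis
    by auto
qed

theorem theorem7:
  fixes r :: real and f :: "vec2 \<Rightarrow> vec2" and m :: nat
    and g :: "nat \<Rightarrow> vec2" and c :: "nat \<Rightarrow> real" and psi :: vec2 and s :: real
  assumes "r > 0"
    and "C2c (ball 0 r) (\<lambda>x. f x $ 1)" and "C2c (ball 0 r) (\<lambda>x. f x $ 2)"
    and "inj_on g {1..m}"
    and "\<forall>i\<in>{1..m}. norm (g i) = 1"
    and "\<forall>i\<in>{1..m}. c i \<noteq> 0"
    and "norm psi = 1"
    and "psi \<notin> sing_dirs1 m g \<union> sing_dirs2 m c g"
  shows "\<exists>D. ((\<lambda>t. radonV (star_transform m c g f) psi t) has_vector_derivative D) (at s)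
            \<and> Qmat m c g psi *v D = radonV f psi s"
proof -
  have f_C2c: "C2c (ball 0 r) (\<lambda>x. f x $ k)" for k
    using assms(2,3) exhaust_2[of k] by auto
  have transversal: "psi \<bullet> g i \<noteq> 0" if "i \<in> {1..m}" for i
    using assms(7,8) that by (auto simp: sing_dirs1_def)
  have "gamma_psi m c g psi \<noteq> 0"
    using assms(7,8) by (auto simp: sing_dirs2_def)
  show ?thesis
  proof (intro exI conjI)
    show "((\<lambda>t. radonV (star_transform m c g f) psi t) has_vector_derivative
        frame_matrix (gamma_psi m c g psi) *v radonV f psi s) (at s)"
      using f_C2c C2_continuous C2c_vanishing[OF f_C2c] assms(7) transversal
      by (intro radonV_star_transform_has_derivative[where r = r]) (auto simp: C2c_def)
    show "Qmat m c g psi *v (frame_matrix (gamma_psi m c g psi) *v radonV f psi s) = radonV f psi s"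
      unfolding Qmat_def frame_matrix_def[symmetric]
      by (rule matrix_inv_frame_matrix_mult_vec) fact
  qed
qed

end
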